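(* Let $\mathbf X\sim\mathrm E_n(\boldsymbol\mu,\Sigma,\tau)$ with $\Sigma$ invertible, let $\alpha\in(0,1/2)$, and let $\boldsymbol\sigma=(\sigma_1,\dots,\sigma_n)^\top$ with $\sigma_i=\sqrt{\sigma_{ii}}$. Then the maximization problem $\max_{\mathbf w\in\Delta_n}\mathbf w^\top\boldsymbol\sigma/\sqrt{\mathbf w^\top\Sigma\mathbf w}$ has a solution, and any maximizer $\mathbf w^*$ satisfies $$\mathrm{DQ}^{\rho}_\alpha(\mathbf w^*\odot\mathbf X)=\min_{\mathbf w\in\Delta_n}\mathrm{DQ}^{\rho}_\alpha(\mathbf w\odot\mathbf X)$$ for $\rho=\mathrm{VaR}$, and also for $\rho=\mathrm{ES}$ provided $Y\sim\mathrm E_1(0,1,\tau)$ satisfies $\mathbb E|Y|<\infty$.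
   Context: Let $(\Omega,\mathcal F,\mathbb P)$ be an atomless probability space. For $\alpha\in[0,1)$ and a random variable $X$, $\mathrm{VaR}_\alpha(X)=\inf\{x\in\mathbb R:\mathbb P(X\le x)\ge 1-\alpha\}$; for $\alpha\in(0,1)$ and integrable $X$, $\mathrm{ES}_\alpha(X)=\frac1\alpha\int_0^\alpha\mathrm{VaR}_\beta(X)\,\mathrm d\beta$. For $\rho\in\{\mathrm{VaR},\mathrm{ES}\}$, $\alpha\in(0,1)$ and $\mathbf X=(X_1,\dots,X_n)$ (integrable components when $\rho=\mathrm{ES}$), $\mathrm{DQ}^\rho_\alpha(\mathbf X)=\alpha^*/\alpha$, where $\alpha^*=\inf\{\beta\in(0,1):\rho_\beta(\sum_{i=1}^nX_i)\le\sum_{i=1}^n\rho_\alpha(X_i)\}$, with $\inf\emptyset=1$. A random vector $\mathbf X$ in $\mathbb R^n$ has elliptical distribution $\mathrm E_n(\boldsymbol\mu,\Sigma,\tau)$, with $\boldsymbol\mu\in\mathbb R^n$, $\Sigma=(\sigma_{ij})$ positive semi-definite and nonzero, and $\tau:[0,\infty)\to\mathbb R$, if $\mathbb E[\exp(\mathrm i\,\mathbf t^\top\mathbf X)]=\exp(\mathrm i\,\mathbf t^\top\boldsymbol\mu)\,\tau(\mathbf t^\top\Sigma\mathbf t)$ for all $\mathbf t\in\mathbb R^n$. $\Delta_n=\{\mathbf x\in[0,1]^n:x_1+\dots+x_n=1\}$, and for $\mathbf w\in\Delta_n$, $\mathbf w\odot\mathbf X=(w_1X_1,\dots,w_nX_n)$.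 *)

theory Defs
  imports "HOL-Probability.Probability" "HOL-Analysis.Analysis"
begin

definition atomless :: "'a measure \<Rightarrow> bool" where
  "atomless M \<longleftrightarrow> (\<forall>A\<in>sets M. measure M A > 0 \<longrightarrow>
      (\<exists>B\<in>sets M. B \<subseteq> A \<and> 0 < measure M B \<and> measure M B < measure M A))"

definition VaR :: "'a measure \<Rightarrow> real \<Rightarrow> ('a \<Rightarrow> real) \<Rightarrow> real" where
  "VaR M \<alpha> X = Inf {x. measure M {\<omega>\<in>space M. X \<omega> \<le> x} \<ge> 1 - \<alpha>}"

definition ES :: "'a measure \<Rightarrow> real \<Rightarrow> ('a \<Rightarrow> real) \<Rightarrow> real" where
  "ES M \<alpha> X = (1 / \<alpha>) * (LBINT \<beta>=0..\<alpha>. VaR M \<beta> X)"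

definition alpha_star :: "(real \<Rightarrow> ('a \<Rightarrow> real) \<Rightarrow> real) \<Rightarrow> real \<Rightarrow> ('n::finite \<Rightarrow> 'a \<Rightarrow> real) \<Rightarrow> real" where
  "alpha_star \<rho> \<alpha> Xs =
     (let S = {\<beta>\<in>{0<..<1}. \<rho> \<beta> (\<lambda>\<omega>. \<Sum>i\<in>UNIV. Xs i \<omega>) \<le> (\<Sum>i\<in>UNIV. \<rho> \<alpha> (Xs i))}
      in if S = {} then 1 else Inf S)"

definition DQ :: "(real \<Rightarrow> ('a \<Rightarrow> real) \<Rightarrow> real) \<Rightarrow> real \<Rightarrow> ('n::finite \<Rightarrow> 'a \<Rightarrow> real) \<Rightarrow> real" where
  "DQ \<rho> \<alpha> Xs = alpha_star \<rho> \<alpha> Xs / \<alpha>"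

definition elliptical :: "'a measure \<Rightarrow> ('a \<Rightarrow> real^'n) \<Rightarrow> real^'n \<Rightarrow> real^'n^'n \<Rightarrow> (real \<Rightarrow> real) \<Rightarrow> bool" where
  "elliptical M X \<mu> \<Sigma> \<tau> \<longleftrightarrow>
     X \<in> borel_measurable M \<and>
     transpose \<Sigma> = \<Sigma> \<and> (\<forall>x. 0 \<le> x \<bullet> (\<Sigma> *v x)) \<and> \<Sigma> \<noteq> 0 \<and>
     (\<forall>t. (CLINT \<omega>|M. cis (t \<bullet> X \<omega>)) = cis (t \<bullet> \<mu>) * complex_of_real (\<tau> (t \<bullet> (\<Sigma> *v t))))"

definition elliptical1_std :: "'a measure \<Rightarrow> ('a \<Rightarrow> real) \<Rightarrow> (real \<Rightarrow> real) \<Rightarrow> bool" where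
  "elliptical1_std M Y \<tau> \<longleftrightarrow>
     Y \<in> borel_measurable M \<and>
     (\<forall>t::real. (CLINT \<omega>|M. cis (t * Y \<omega>)) = complex_of_real (\<tau> (t * t)))"

definition Delta_simplex :: "(real^'n) set" where
  "Delta_simplex = {w. (\<forall>i. 0 \<le> w $ i) \<and> (\<Sum>i\<in>UNIV. w $ i) = 1}"

definition wprod :: "real^'n \<Rightarrow> ('a \<Rightarrow> real^'n) \<Rightarrow> ('n \<Rightarrow> 'a \<Rightarrow> real)" where
  "wprod w X = (\<lambda>i \<omega>. w $ i * X \<omega> $ i)"

definition sigma_vec :: "real^'n^'n \<Rightarrow> real^'n" where
  "sigma_vec \<Sigma> = (\<chi> i. sqrt (\<Sigma> $ i $ i))"

definition div_ratio :: "real^'n^'n \<Rightarrow> real^'n \<Rightarrow> real" where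
  "div_ratio \<Sigma> w = (w \<bullet> sigma_vec \<Sigma>) / sqrt (w \<bullet> (\<Sigma> *v w))"

end

theory Submission
  imports Defs
begin

text \<open>For an elliptical vector \<open>X\<close> and \<open>w \<noteq> 0\<close>, the standardized projection
  \<open>(w\<^sup>T X - w\<^sup>T \<mu>) / \<surd>(w\<^sup>T \<Sigma> w)\<close> has characteristic function \<open>\<tau>(t\<^sup>2)\<close>, so by Levy's uniqueness
  theorem all of them share the law of one symmetric \<open>Y\<close>. Hence
  \<open>\<Sum> w\<^sub>i X\<^sub>i \<sim> w\<^sup>T \<mu> + \<surd>(w\<^sup>T \<Sigma> w) Y\<close> and \<open>w\<^sub>i X\<^sub>i \<sim> w\<^sub>i \<mu>\<^sub>i + w\<^sub>i \<sigma>\<^sub>i Y\<close>, and since VaR and ES are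
  law invariant and positively affine, the condition defining \<open>\<alpha>*\<close> reduces to
  \<open>\<rho>\<^sub>\<beta>(Y) \<le> r(w) \<rho>\<^sub>\<alpha>(Y)\<close> with \<open>r(w) = w\<^sup>T \<sigma> / \<surd>(w\<^sup>T \<Sigma> w)\<close>. As \<open>\<rho>\<^sub>\<alpha>(Y) \<ge> 0\<close> for
  \<open>\<alpha> < 1/2\<close> by symmetry, these sets grow with \<open>r(w)\<close>, so a maximizer of \<open>r\<close> on the (compact)
  simplex minimizes DQ.\<close>

lemma cdf_superlevel_eq_atLeast:
  assumes D: "real_distribution D" and \<beta>: "0 < \<beta>" "\<beta> < 1"
  shows "{x. 1 - \<beta> \<le> cdf D x} = {Inf {x. 1 - \<beta> \<le> cdf D x}..}"
proof -
  interpret real_distribution D by fact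
  define S where "S = {x. 1 - \<beta> \<le> cdf D x}"
  have up: "y \<in> S" if "x \<in> S" "x \<le> y" for x y
    using that cdf_nondecreasing unfolding S_def by (auto intro: order_trans)
  have "\<forall>\<^sub>F x in at_top. 1 - \<beta> < cdf D x"
    using order_tendstoD(1)[OF cdf_lim_at_top_prob] \<beta> by simp
  then obtain x0 where "1 - \<beta> \<le> cdf D x0"
    by (metis eventually_at_top_linorder order_le_less order_refl)
  then have ne: "S \<noteq> {}" unfolding S_def by auto
  have "\<forall>\<^sub>F x in at_bot. cdf D x < 1 - \<beta>"
    using order_tendstoD(2)[OF cdf_lim_at_bot] \<beta> by simp
  then obtain b where "\<And>x. x \<le> b \<Longrightarrow> cdf D x < 1 - \<beta>"
    by (auto simp: eventually_at_bot_linorder)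
  then have bdd: "bdd_below S"
    unfolding S_def bdd_below_def by (metis linorder_not_le mem_Collect_eq order_less_imp_le)
  have "\<forall>y. Inf S < y \<longrightarrow> 1 - \<beta> \<le> cdf D y"
    using cInf_less_iff[OF ne bdd] up unfolding S_def by (auto intro: less_imp_le)
  then have right: "\<forall>\<^sub>F y in at_right (Inf S). 1 - \<beta> \<le> cdf D y"
    unfolding eventually_at_right_field by (intro exI[of _ "Inf S + 1"]) auto
  \<comment> \<open>right continuity of the cdf puts the infimum into the set\<close>
  have "1 - \<beta> \<le> cdf D (Inf S)"
    using cdf_is_right_cont[of "Inf S"] right
    by (intro tendsto_lowerbound[where F="at_right (Inf S)"]) (auto simp: continuous_within)
  then have "Inf S \<in> S" unfolding S_def by simp
  then show ?thesis using up cInf_lower[OF _ bdd] unfolding S_def[symmetric] by auto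
qed

context prob_space
begin

lemma cdf_distr_eq_measure:
  assumes "f \<in> borel_measurable M"
  shows "cdf (distr M borel f) x = measure M {\<omega>\<in>space M. f \<omega> \<le> x}"
  unfolding cdf_def using assms
  by (subst measure_distr) (auto intro!: arg_cong[where f="measure M"])

lemma VaR_eq_Inf_cdf:
  assumes "f \<in> borel_measurable M"
  shows "VaR M \<beta> f = Inf {x. 1 - \<beta> \<le> cdf (distr M borel f) x}"
  unfolding VaR_def cdf_distr_eq_measure[OF assms] by simp

lemma VaR_cong_distr:
  assumes "f \<in> borel_measurable M" "g \<in> borel_measurable M"
    and "distr M borel f = distr M borel g"
  shows "VaR M \<beta> f = VaR M \<beta> g"
  using assms by (simp add: VaR_eq_Inf_cdf)

lemma VaR_superlevel_eq_atLeast: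
  assumes f: "f \<in> borel_measurable M" and \<beta>: "0 < \<beta>" "\<beta> < 1"
  shows "{x. 1 - \<beta> \<le> measure M {\<omega>\<in>space M. f \<omega> \<le> x}} = {VaR M \<beta> f..}"
  using cdf_superlevel_eq_atLeast[OF real_distribution_distr[OF f] \<beta>]
  unfolding VaR_eq_Inf_cdf[OF f] cdf_distr_eq_measure[OF f] by simp

lemma VaR_le_iff:
  assumes "f \<in> borel_measurable M" "0 < \<beta>" "\<beta> < 1"
  shows "VaR M \<beta> f \<le> x \<longleftrightarrow> 1 - \<beta> \<le> measure M {\<omega>\<in>space M. f \<omega> \<le> x}"
  using VaR_superlevel_eq_atLeast[OF assms] by (auto simp: set_eq_iff)

lemma VaR_antimono:
  assumes f: "f \<in> borel_measurable M" and "0 < \<beta>" "\<beta> \<le> \<gamma>" "\<gamma> < 1"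
  shows "VaR M \<gamma> f \<le> VaR M \<beta> f"
proof -
  have "1 - \<beta> \<le> measure M {\<omega>\<in>space M. f \<omega> \<le> VaR M \<beta> f}"
    using VaR_le_iff[OF f, of \<beta> "VaR M \<beta> f"] assms by simp
  then have "1 - \<gamma> \<le> measure M {\<omega>\<in>space M. f \<omega> \<le> VaR M \<beta> f}"
    using assms by linarith
  then show ?thesis using VaR_le_iff[OF f, of \<gamma> "VaR M \<beta> f"] assms by simp
qed

lemma VaR_affine:
  assumes f: "f \<in> borel_measurable M" and \<beta>: "0 < \<beta>" "\<beta> < 1" and s: "0 \<le> s"
  shows "VaR M \<beta> (\<lambda>\<omega>. a + s * f \<omega>) = a + s * VaR M \<beta> f"
proof -
  have "{x. 1 - \<beta> \<le> measure M {\<omega>\<in>space M. a + s * f \<omega> \<le> x}} = {a + s * VaR M \<beta> f..}"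
  proof (cases "s = 0")
    case True
    have "{\<omega>\<in>space M. a \<le> x} = (if a \<le> x then space M else {})" for x by auto
    then show ?thesis using True \<beta> prob_space by auto
  next
    case False
    with s have s: "0 < s" by simp
    then have "{\<omega>\<in>space M. a + s * f \<omega> \<le> x} = {\<omega>\<in>space M. f \<omega> \<le> (x - a) / s}" for x
      by (auto simp: field_simps)
    then have "{x. 1 - \<beta> \<le> measure M {\<omega>\<in>space M. a + s * f \<omega> \<le> x}}
        = {x. VaR M \<beta> f \<le> (x - a) / s}"
      using VaR_le_iff[OF f \<beta>] by simp
    also have "\<dots> = {a + s * VaR M \<beta> f..}" using s by (auto simp: field_simps)
    finally show ?thesis .
  qed
  then show ?thesis unfolding VaR_def by simp
qed

text \<open>Were \<open>q = VaR\<^sub>\<beta>(f)\<close> negative, \<open>{f \<le> q}\<close> and its mirror image \<open>{f \<ge> -q}\<close> would be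
  disjoint events of probability \<open>\<ge> 1 - \<beta> > 1/2\<close> each.\<close>
lemma VaR_nonneg_if_symmetric:
  assumes f: "f \<in> borel_measurable M" and sym: "distr M borel (\<lambda>\<omega>. - f \<omega>) = distr M borel f"
    and \<beta>: "0 < \<beta>" "\<beta> < 1/2"
  shows "0 \<le> VaR M \<beta> f"
proof (rule ccontr)
  define q where "q = VaR M \<beta> f"
  assume "\<not> 0 \<le> VaR M \<beta> f"
  then have q: "q < 0" unfolding q_def by simp
  have lower: "1 - \<beta> \<le> measure M {\<omega>\<in>space M. f \<omega> \<le> q}"
    using VaR_le_iff[OF f, of \<beta> q] \<beta> unfolding q_def by simp
  have "measure M {\<omega>\<in>space M. - f \<omega> \<le> q} = measure M {\<omega>\<in>space M. f \<omega> \<le> q}"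
    using cdf_distr_eq_measure[of "\<lambda>\<omega>. - f \<omega>" q] cdf_distr_eq_measure[OF f, of q] sym f by simp
  moreover have "{\<omega>\<in>space M. - f \<omega> \<le> q} = {\<omega>\<in>space M. - q \<le> f \<omega>}" by auto
  ultimately have upper: "1 - \<beta> \<le> measure M {\<omega>\<in>space M. - q \<le> f \<omega>}" using lower by simp
  have "measure M ({\<omega>\<in>space M. f \<omega> \<le> q} \<union> {\<omega>\<in>space M. - q \<le> f \<omega>})
      = measure M {\<omega>\<in>space M. f \<omega> \<le> q} + measure M {\<omega>\<in>space M. - q \<le> f \<omega>}"
    using q f by (intro finite_measure_Union) auto
  moreover have "measure M ({\<omega>\<in>space M. f \<omega> \<le> q} \<union> {\<omega>\<in>space M. - q \<le> f \<omega>}) \<le> 1"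
    by (rule prob_le_1)
  ultimately show False using lower upper \<beta> by linarith
qed

lemma borel_measurable_VaR:
  assumes f: "f \<in> borel_measurable M" and \<beta>: "\<beta> \<le> 1"
  shows "(\<lambda>\<gamma>. indicator {0<..<\<beta>} \<gamma> * VaR M \<gamma> f) \<in> borel_measurable borel"
proof (subst borel_measurable_iff_le, intro allI)
  fix a
  define F where "F = measure M {\<omega>\<in>space M. f \<omega> \<le> a}"
  have "{\<gamma> \<in> space borel. indicator {0<..<\<beta>} \<gamma> * VaR M \<gamma> f \<le> a}
      = ({0<..<\<beta>} \<inter> {1 - F..}) \<union> (if 0 \<le> a then - {0<..<\<beta>} else {})"
    using VaR_le_iff[OF f] \<beta> unfolding F_def by (auto simp: indicator_def)
  then show "{\<gamma> \<in> space borel. indicator {0<..<\<beta>} \<gamma> * VaR M \<gamma> f \<le> a} \<in> sets borel"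
    by simp
qed

text \<open>Layer-cake comparison: the set of \<open>\<gamma>\<close> with \<open>VaR\<^sub>\<gamma>(f) > t\<close> is an interval of length at
  most \<open>P(f > t)\<close>, a shadow of the quantile transform.\<close>
lemma nn_integral_ceiling_VaR_le:
  assumes f: "f \<in> borel_measurable M"
  shows "(\<integral>\<^sup>+\<gamma>. of_nat (nat \<lceil>indicator {0<..<1} \<gamma> * VaR M \<gamma> f\<rceil>) \<partial>lborel)
    \<le> (\<integral>\<^sup>+\<omega>. of_nat (nat \<lceil>f \<omega>\<rceil>) \<partial>M)"
proof -
  define q where "q \<gamma> = nat \<lceil>indicator {0<..<1} \<gamma> * VaR M \<gamma> f\<rceil>" for \<gamma>
  define c where "c \<omega> = nat \<lceil>f \<omega>\<rceil>" for \<omega>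
  have nat_ceiling: "(\<lambda>x::real. nat \<lceil>x\<rceil>) \<in> measurable borel (count_space UNIV)"
    by measurable
  have q_meas: "q \<in> measurable lborel (count_space UNIV)"
    using measurable_compose[OF borel_measurable_VaR[OF f order_refl] nat_ceiling]
    unfolding q_def by simp
  have c_meas: "c \<in> measurable M (count_space UNIV)"
    using measurable_compose[OF f nat_ceiling] unfolding c_def by simp
  have level: "emeasure lborel {\<gamma>\<in>space lborel. t < q \<gamma>} \<le> emeasure M {\<omega>\<in>space M. t < c \<omega>}"
    for t
  proof -
    define F where "F = measure M {\<omega>\<in>space M. f \<omega> \<le> t}"
    have "{\<gamma>\<in>space lborel. t < q \<gamma>} \<subseteq> {0<..<1 - F}"
    proof
      fix \<gamma> assume "\<gamma> \<in> {\<gamma>\<in>space lborel. t < q \<gamma>}"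
      then have t: "t < q \<gamma>" by simp
      have "\<gamma> \<in> {0<..<1}"
      proof (rule ccontr)
        assume "\<gamma> \<notin> {0<..<1}"
        then show False using t unfolding q_def by simp
      qed
      moreover have "real t < VaR M \<gamma> f"
        using t calculation unfolding q_def by (simp add: zless_nat_eq_int_zless less_ceiling_iff)
      ultimately show "\<gamma> \<in> {0<..<1 - F}" using VaR_le_iff[OF f, of \<gamma> t] unfolding F_def by auto
    qed
    then have "emeasure lborel {\<gamma>\<in>space lborel. t < q \<gamma>} \<le> ennreal (1 - F)"
      using emeasure_mono[of _ "{0<..<1 - F}" lborel] prob_le_1 unfolding F_def by simp
    also have "1 - F = measure M {\<omega>\<in>space M. t < f \<omega>}"
    proof -
      have "space M - {\<omega>\<in>space M. f \<omega> \<le> t} = {\<omega>\<in>space M. t < f \<omega>}" by auto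
      moreover have "{\<omega>\<in>space M. f \<omega> \<le> t} \<in> events" using f by measurable
      ultimately show ?thesis unfolding F_def using prob_compl by metis
    qed
    also have "{\<omega>\<in>space M. t < f \<omega>} = {\<omega>\<in>space M. t < c \<omega>}"
      unfolding c_def by (auto, linarith+)
    finally show ?thesis by (simp add: emeasure_eq_measure)
  qed
  have "(\<integral>\<^sup>+\<gamma>. of_nat (q \<gamma>) \<partial>lborel) = (\<Sum>t. emeasure lborel {\<gamma>\<in>space lborel. t < q \<gamma>})"
    by (rule nn_integral_nat_function[OF q_meas])
  also have "\<dots> \<le> (\<Sum>t. emeasure M {\<omega>\<in>space M. t < c \<omega>})"
    by (intro suminf_le level) auto
  also have "\<dots> = (\<integral>\<^sup>+\<omega>. of_nat (c \<omega>) \<partial>M)"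
    by (rule nn_integral_nat_function[OF c_meas, symmetric])
  finally show ?thesis unfolding q_def c_def .
qed

text \<open>On \<open>(0, \<beta>)\<close> the quantile function is bounded below by \<open>VaR\<^sub>\<beta>(f)\<close>, and its positive part
  is integrable by the quantile transform.\<close>
lemma set_integrable_VaR:
  assumes f: "integrable M f" and \<beta>: "0 < \<beta>" "\<beta> < 1"
  shows "set_integrable lborel {0<..<\<beta>} (\<lambda>\<gamma>. VaR M \<gamma> f)"
proof -
  have f_meas: "f \<in> borel_measurable M" using f by simp
  define q where "q \<gamma> = real (nat \<lceil>indicator {0<..<1} \<gamma> * VaR M \<gamma> f\<rceil>)" for \<gamma>
  have q_meas: "q \<in> borel_measurable lborel"
    using borel_measurable_VaR[OF f_meas order_refl] unfolding q_def by simp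
  have "integrable M (\<lambda>\<omega>. real (nat \<lceil>f \<omega>\<rceil>))"
  proof (rule Bochner_Integration.integrable_bound)
    show "integrable M (\<lambda>\<omega>. \<bar>f \<omega>\<bar> + 1)" using f by simp
    show "AE \<omega> in M. norm (real (nat \<lceil>f \<omega>\<rceil>)) \<le> norm (\<bar>f \<omega>\<bar> + 1)"
      by (intro AE_I2) (simp, linarith)
  qed (use f_meas in simp)
  then have "(\<integral>\<^sup>+\<omega>. of_nat (nat \<lceil>f \<omega>\<rceil>) \<partial>M) < \<infinity>"
    by (simp add: integrable_iff_bounded ennreal_of_nat_eq_real_of_nat)
  then have "(\<integral>\<^sup>+\<gamma>. ennreal (norm (q \<gamma>)) \<partial>lborel) < \<infinity>"
    using nn_integral_ceiling_VaR_le[OF f_meas] unfolding q_def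
    by (simp add: ennreal_of_nat_eq_real_of_nat)
  then have q_int: "integrable lborel q"
    using q_meas by (intro integrableI_bounded)
  show ?thesis
    unfolding set_integrable_def
  proof (rule Bochner_Integration.integrable_bound)
    show "integrable lborel (\<lambda>\<gamma>. q \<gamma> + indicator {0<..<\<beta>} \<gamma> * \<bar>VaR M \<beta> f\<bar>)"
      using q_int \<beta> by (intro Bochner_Integration.integrable_add integrable_mult_left integrable_real_indicator) auto
    show "(\<lambda>\<gamma>. indicator {0<..<\<beta>} \<gamma> *\<^sub>R VaR M \<gamma> f) \<in> borel_measurable lborel"
      using borel_measurable_VaR[OF f_meas, of \<beta>] \<beta> by simp
    show "AE \<gamma> in lborel. norm (indicator {0<..<\<beta>} \<gamma> *\<^sub>R VaR M \<gamma> f)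
        \<le> norm (q \<gamma> + indicator {0<..<\<beta>} \<gamma> * \<bar>VaR M \<beta> f\<bar>)"
    proof (intro AE_I2)
      fix \<gamma>
      show "norm (indicator {0<..<\<beta>} \<gamma> *\<^sub>R VaR M \<gamma> f)
          \<le> norm (q \<gamma> + indicator {0<..<\<beta>} \<gamma> * \<bar>VaR M \<beta> f\<bar>)"
      proof (cases "\<gamma> \<in> {0<..<\<beta>}")
        case True
        then have "VaR M \<beta> f \<le> VaR M \<gamma> f" using VaR_antimono[OF f_meas] \<beta> by simp
        moreover have "q \<gamma> = real (nat \<lceil>VaR M \<gamma> f\<rceil>)" using True \<beta> unfolding q_def by simp
        ultimately show ?thesis using True by simp linarith
      qed (simp add: q_def)
    qed
  qed
qed

lemma ES_eq_set_integral:
  assumes "0 < \<beta>"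
  shows "ES M \<beta> f = (1 / \<beta>) * (LINT \<gamma>:{0<..<\<beta>}|lborel. VaR M \<gamma> f)"
  unfolding ES_def interval_lebesgue_integral_def using assms by (simp add: zero_ereal_def)

lemma ES_cong_distr:
  assumes "f \<in> borel_measurable M" "g \<in> borel_measurable M"
    and "distr M borel f = distr M borel g"
  shows "ES M \<beta> f = ES M \<beta> g"
  unfolding ES_def using VaR_cong_distr[OF assms] by simp

lemma ES_nonneg:
  assumes "0 < \<beta>" and "\<And>\<gamma>. 0 < \<gamma> \<Longrightarrow> \<gamma> < \<beta> \<Longrightarrow> 0 \<le> VaR M \<gamma> f"
  shows "0 \<le> ES M \<beta> f"
proof -
  have "0 \<le> (LINT \<gamma>:{0<..<\<beta>}|lborel. VaR M \<gamma> f)"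
    unfolding set_lebesgue_integral_def
    using assms(2) by (intro Bochner_Integration.integral_nonneg) (auto simp: indicator_def)
  then show ?thesis using assms(1) by (simp add: ES_eq_set_integral)
qed

lemma ES_affine:
  assumes f: "integrable M f" and \<beta>: "0 < \<beta>" "\<beta> < 1" and s: "0 \<le> s"
  shows "ES M \<beta> (\<lambda>\<omega>. a + s * f \<omega>) = a + s * ES M \<beta> f"
proof -
  have "(LINT \<gamma>:{0<..<\<beta>}|lborel. VaR M \<gamma> (\<lambda>\<omega>. a + s * f \<omega>))
      = (LINT \<gamma>:{0<..<\<beta>}|lborel. a + s * VaR M \<gamma> f)"
    using f \<beta> s by (intro set_lebesgue_integral_cong) (auto simp: VaR_affine)
  also have "\<dots> = (LINT \<gamma>:{0<..<\<beta>}|lborel. a) + s * (LINT \<gamma>:{0<..<\<beta>}|lborel. VaR M \<gamma> f)"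
  proof (subst set_integral_add(2))
    show "set_integrable lborel {0<..<\<beta>} (\<lambda>\<gamma>. a)"
      unfolding set_integrable_def using \<beta>
      by (intro integrable_scaleR_left integrable_real_indicator) auto
    show "set_integrable lborel {0<..<\<beta>} (\<lambda>\<gamma>. s * VaR M \<gamma> f)"
      using set_integrable_VaR[OF f \<beta>] by (rule set_integrable_mult_right)
  qed (simp_all add: set_integral_mult_right)
  also have "(LINT \<gamma>:{0<..<\<beta>}|lborel. a) = \<beta> * a"
    using \<beta> by (subst set_integral_const) (auto simp: measure_def)
  finally show ?thesis using \<beta> by (simp add: ES_eq_set_integral field_simps)
qed

end

lemma quadratic_nonneg_imp_linear_coeff_zero:
  fixes a b :: real
  assumes b: "0 \<le> b" and nonneg: "\<And>t. 0 \<le> 2 * t * a + t * t * b"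
  shows "a = 0"
proof -
  define c where "c = b + 1"
  have c: "0 < c" using b by (simp add: c_def)
  \<comment> \<open>evaluate at \<open>t = -a/(b+1)\<close> rather than at the vertex \<open>-a/b\<close>, which may not exist\<close>
  define t where "t = - a / c"
  have tc: "t * c = - a" using c by (simp add: t_def)
  have "c * c * (2 * t * a + t * t * b) = 2 * (t * c) * a * c + (t * c) * (t * c) * b"
    by (simp add: algebra_simps)
  also have "\<dots> = - (a * a * (b + 2))" unfolding tc by (simp add: c_def algebra_simps)
  finally have "c * c * (2 * t * a + t * t * b) = - (a * a * (b + 2))" .
  moreover have "0 \<le> c * c * (2 * t * a + t * t * b)" using nonneg[of t] c by simp
  ultimately have "a * a * (b + 2) \<le> 0" by linarith
  then show ?thesis using b by (auto simp: mult_le_0_iff zero_le_mult_iff)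
qed

lemma pos_definite_if_psd_invertible:
  fixes S :: "real^'n^'n"
  assumes sym: "transpose S = S" and psd: "\<And>x. 0 \<le> x \<bullet> (S *v x)" and inv: "invertible S"
    and x: "x \<noteq> 0"
  shows "0 < x \<bullet> (S *v x)"
proof (rule ccontr)
  assume "\<not> 0 < x \<bullet> (S *v x)"
  then have x0: "x \<bullet> (S *v x) = 0" using psd[of x] by linarith
  have symm: "a \<bullet> (S *v b) = b \<bullet> (S *v a)" for a b
    by (metis dot_lmul_matrix inner_commute sym transpose_matrix_vector)
  have "y \<bullet> (S *v x) = 0" for y
  proof (rule quadratic_nonneg_imp_linear_coeff_zero)
    show "0 \<le> y \<bullet> (S *v y)" by (rule psd)
    fix t
    have "0 \<le> (x + t *\<^sub>R y) \<bullet> (S *v (x + t *\<^sub>R y))" by (rule psd)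
    also have "\<dots> = x \<bullet> (S *v x) + t * (y \<bullet> (S *v x)) + t * (x \<bullet> (S *v y)) + t * t * (y \<bullet> (S *v y))"
      by (simp add: matrix_vector_right_distrib inner_add_left inner_add_right
          matrix_vector_mult_scaleR algebra_simps)
    also have "\<dots> = 2 * t * (y \<bullet> (S *v x)) + t * t * (y \<bullet> (S *v y))"
      using x0 symm[of x y] by simp
    finally show "0 \<le> 2 * t * (y \<bullet> (S *v x)) + t * t * (y \<bullet> (S *v y))" .
  qed
  then have "S *v x = 0" by (metis inner_eq_zero_iff)
  then show False
    using inv x by (metis invertible_left_inverse matrix_left_invertible_ker)
qed

lemma compact_Delta_simplex: "compact (Delta_simplex :: (real^'n::finite) set)"
proof -
  have "Delta_simplex \<subseteq> cball (0::real^'n) 1"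
  proof
    fix w :: "real^'n" assume w: "w \<in> Delta_simplex"
    have "norm w \<le> (\<Sum>i\<in>UNIV. \<bar>w $ i\<bar>)" by (rule norm_le_l1_cart)
    also have "\<dots> = 1" using w unfolding Delta_simplex_def by simp
    finally show "w \<in> cball 0 1" by simp
  qed
  moreover have "closed (Delta_simplex :: (real^'n) set)"
    unfolding Delta_simplex_def Collect_conj_eq
    by (intro closed_Int closed_Collect_all closed_Collect_le closed_Collect_eq continuous_intros)
  ultimately show ?thesis by (metis bounded_cball bounded_subset compact_eq_bounded_closed)
qed

lemma Delta_simplex_nonempty: "(Delta_simplex :: (real^'n::finite) set) \<noteq> {}"
proof -
  have "(\<chi> i. 1 / real CARD('n)) \<in> (Delta_simplex :: (real^'n) set)"
    unfolding Delta_simplex_def by simp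
  then show ?thesis by blast
qed

lemma nonzero_if_Delta_simplex: "w \<in> Delta_simplex \<Longrightarrow> w \<noteq> 0"
  unfolding Delta_simplex_def by auto

lemma alpha_star_mono:
  fixes \<rho> :: "real \<Rightarrow> ('a \<Rightarrow> real) \<Rightarrow> real" and Xw Xv :: "'n::finite \<Rightarrow> 'a \<Rightarrow> real"
  assumes "\<And>\<beta>. \<beta> \<in> {0<..<1} \<Longrightarrow>
      \<rho> \<beta> (\<lambda>\<omega>. \<Sum>i\<in>UNIV. Xv i \<omega>) \<le> (\<Sum>i\<in>UNIV. \<rho> \<alpha> (Xv i)) \<Longrightarrow>
      \<rho> \<beta> (\<lambda>\<omega>. \<Sum>i\<in>UNIV. Xw i \<omega>) \<le> (\<Sum>i\<in>UNIV. \<rho> \<alpha> (Xw i))"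
  shows "alpha_star \<rho> \<alpha> Xw \<le> alpha_star \<rho> \<alpha> Xv"
proof -
  define Sw where "Sw = {\<beta>\<in>{0<..<1}. \<rho> \<beta> (\<lambda>\<omega>. \<Sum>i\<in>UNIV. Xw i \<omega>) \<le> (\<Sum>i\<in>UNIV. \<rho> \<alpha> (Xw i))}"
  define Sv where "Sv = {\<beta>\<in>{0<..<1}. \<rho> \<beta> (\<lambda>\<omega>. \<Sum>i\<in>UNIV. Xv i \<omega>) \<le> (\<Sum>i\<in>UNIV. \<rho> \<alpha> (Xv i))}"
  have sub: "Sv \<subseteq> Sw" using assms unfolding Sv_def Sw_def by auto
  have bdd: "bdd_below Sw" unfolding Sw_def bdd_below_def by (rule exI[of _ 0]) auto
  have "Inf Sw \<le> 1" if ne: "Sw \<noteq> {}"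
  proof -
    obtain x where "x \<in> Sw" using ne by auto
    then show ?thesis using cInf_lower[OF _ bdd, of x] unfolding Sw_def by auto
  qed
  then have "(if Sw = {} then 1 else Inf Sw) \<le> (if Sv = {} then 1 else Inf Sv)"
    using sub cInf_superset_mono[OF _ bdd sub] by auto
  then show ?thesis unfolding alpha_star_def Let_def Sw_def Sv_def .
qed

text \<open>Both sets defining \<open>\<alpha>*\<close> are then of the form \<open>{\<beta>. R \<beta> \<le> (d / s) R \<alpha>}\<close>, nested
  because \<open>R \<alpha> \<ge> 0\<close>.\<close>
lemma DQ_le_if_affine_ratio_le:
  fixes \<rho> :: "real \<Rightarrow> ('a \<Rightarrow> real) \<Rightarrow> real" and Xw Xv :: "'n::finite \<Rightarrow> 'a \<Rightarrow> real"
  assumes w_pool: "\<And>\<beta>. \<beta> \<in> {0<..<1} \<Longrightarrow> \<rho> \<beta> (\<lambda>\<omega>. \<Sum>i\<in>UNIV. Xw i \<omega>) = c1 + s1 * R \<beta>"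
    and w_sep: "(\<Sum>i\<in>UNIV. \<rho> \<alpha> (Xw i)) = c1 + d1 * R \<alpha>"
    and v_pool: "\<And>\<beta>. \<beta> \<in> {0<..<1} \<Longrightarrow> \<rho> \<beta> (\<lambda>\<omega>. \<Sum>i\<in>UNIV. Xv i \<omega>) = c2 + s2 * R \<beta>"
    and v_sep: "(\<Sum>i\<in>UNIV. \<rho> \<alpha> (Xv i)) = c2 + d2 * R \<alpha>"
    and s: "0 < s1" "0 < s2" and ratio: "d2 / s2 \<le> d1 / s1" and R: "0 \<le> R \<alpha>" and \<alpha>: "0 < \<alpha>"
  shows "DQ \<rho> \<alpha> Xw \<le> DQ \<rho> \<alpha> Xv"
proof -
  have "alpha_star \<rho> \<alpha> Xw \<le> alpha_star \<rho> \<alpha> Xv"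
  proof (rule alpha_star_mono)
    fix \<beta> :: real assume \<beta>: "\<beta> \<in> {0<..<1}"
      and "\<rho> \<beta> (\<lambda>\<omega>. \<Sum>i\<in>UNIV. Xv i \<omega>) \<le> (\<Sum>i\<in>UNIV. \<rho> \<alpha> (Xv i))"
    then have "R \<beta> \<le> (d2 / s2) * R \<alpha>" using v_pool v_sep s by (simp add: field_simps)
    also have "\<dots> \<le> (d1 / s1) * R \<alpha>" using ratio R by (rule mult_right_mono)
    finally have "s1 * R \<beta> \<le> d1 * R \<alpha>" using s by (simp add: field_simps)
    then show "\<rho> \<beta> (\<lambda>\<omega>. \<Sum>i\<in>UNIV. Xw i \<omega>) \<le> (\<Sum>i\<in>UNIV. \<rho> \<alpha> (Xw i))"
      using \<beta> w_pool w_sep by simp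
  qed
  then show ?thesis unfolding DQ_def using \<alpha> by (simp add: divide_right_mono)
qed

locale elliptical_vector = prob_space M for M :: "'a measure" +
  fixes X :: "'a \<Rightarrow> real^'n::finite" and \<mu> :: "real^'n" and \<Sigma> :: "real^'n^'n"
    and \<tau> :: "real \<Rightarrow> real"
  assumes elliptical: "elliptical M X \<mu> \<Sigma> \<tau>" and invertible: "invertible \<Sigma>"
begin

lemma X_measurable[measurable]: "X \<in> borel_measurable M"
  using elliptical unfolding elliptical_def by simp

lemma pos_definite: "x \<noteq> 0 \<Longrightarrow> 0 < x \<bullet> (\<Sigma> *v x)"
  using elliptical invertible pos_definite_if_psd_invertible unfolding elliptical_def by blast

definition sd :: "real^'n \<Rightarrow> real" where
  "sd u = sqrt (u \<bullet> (\<Sigma> *v u))"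

lemma sd_pos: "u \<noteq> 0 \<Longrightarrow> 0 < sd u"
  unfolding sd_def using pos_definite by simp

definition std_proj :: "real^'n \<Rightarrow> 'a \<Rightarrow> real" where
  "std_proj u \<omega> = (u \<bullet> X \<omega> - u \<bullet> \<mu>) / sd u"

lemma std_proj_measurable[measurable]: "std_proj u \<in> borel_measurable M"
  unfolding std_proj_def by measurable

lemma std_proj_uminus: "std_proj (- u) = (\<lambda>\<omega>. - std_proj u \<omega>)"
proof -
  have "\<Sigma> *v (- u) = - (\<Sigma> *v u)"
    using matrix_vector_mult_scaleR[of \<Sigma> "-1" u] by simp
  then show ?thesis
    unfolding std_proj_def sd_def by (simp add: fun_eq_iff) (metis minus_diff_eq minus_divide_left)
qed

lemma char_std_proj:
  assumes u: "u \<noteq> 0"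
  shows "(CLINT \<omega>|M. cis (t * std_proj u \<omega>)) = complex_of_real (\<tau> (t * t))"
proof -
  define v where "v = (t / sd u) *\<^sub>R u"
  have proj: "t * std_proj u \<omega> = v \<bullet> X \<omega> - v \<bullet> \<mu>" for \<omega>
    using sd_pos[OF u] unfolding std_proj_def v_def by (simp add: field_simps inner_diff_right)
  have "v \<bullet> (\<Sigma> *v v) = (t / sd u)\<^sup>2 * (sd u)\<^sup>2"
    using pos_definite[OF u] unfolding v_def sd_def
    by (simp add: matrix_vector_mult_scaleR power2_eq_square)
  then have var: "v \<bullet> (\<Sigma> *v v) = t * t"
    using sd_pos[OF u] by (simp add: field_simps power2_eq_square)
  have "(CLINT \<omega>|M. cis (t * std_proj u \<omega>)) = (CLINT \<omega>|M. cis (v \<bullet> X \<omega>) * cis (- (v \<bullet> \<mu>)))"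
    unfolding proj by (simp add: cis_mult)
  also have "\<dots> = cis (v \<bullet> \<mu>) * complex_of_real (\<tau> (t * t)) * cis (- (v \<bullet> \<mu>))"
    using elliptical unfolding elliptical_def by (simp add: var)
  also have "\<dots> = complex_of_real (\<tau> (t * t))"
    by (simp add: mult.commute mult.left_commute cis_mult)
  finally show ?thesis .
qed

lemma char_distr_std_proj:
  assumes "u \<noteq> 0"
  shows "char (distr M borel (std_proj u)) = (\<lambda>t. complex_of_real (\<tau> (t * t)))"
proof
  fix t
  have "char (distr M borel (std_proj u)) t = (CLINT \<omega>|M. cis (t * std_proj u \<omega>))"
    unfolding char_def by (subst integral_distr) (auto simp: cis_conv_exp)
  then show "char (distr M borel (std_proj u)) t = complex_of_real (\<tau> (t * t))"
    using char_std_proj[OF assms] by simp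
qed

lemma distr_std_proj_eq:
  assumes "u \<noteq> 0" "v \<noteq> 0"
  shows "distr M borel (std_proj u) = distr M borel (std_proj v)"
  by (rule Levy_uniqueness) (auto simp: char_distr_std_proj assms)

text \<open>Every standardized projection has the law \<open>E\<^sub>1(0, 1, \<tau>)\<close>, so an arbitrary nonzero
  direction serves as the reference one.\<close>
definition Y :: "'a \<Rightarrow> real" where
  "Y = std_proj (axis undefined 1)"

lemma Y_measurable[measurable]: "Y \<in> borel_measurable M"
  unfolding Y_def by simp

lemma distr_std_proj_eq_Y: "u \<noteq> 0 \<Longrightarrow> distr M borel (std_proj u) = distr M borel Y"
  unfolding Y_def by (rule distr_std_proj_eq) auto

lemma elliptical1_std_Y: "elliptical1_std M Y \<tau>"
  unfolding elliptical1_std_def Y_def using char_std_proj[of "axis undefined 1"] by simp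

lemma distr_uminus_Y: "distr M borel (\<lambda>\<omega>. - Y \<omega>) = distr M borel Y"
  using distr_std_proj_eq_Y[of "- axis undefined 1"] unfolding Y_def std_proj_uminus by simp

lemma integrable_std_proj:
  assumes Y: "integrable M Y" and u: "u \<noteq> 0"
  shows "integrable M (std_proj u)"
proof -
  have "integrable (distr M borel Y) (\<lambda>x. x)"
    using Y by (subst integrable_distr_eq) auto
  then have "integrable (distr M borel (std_proj u)) (\<lambda>x. x)"
    using distr_std_proj_eq_Y[OF u] by simp
  then show ?thesis by (subst (asm) integrable_distr_eq) auto
qed

lemma sigma_vec_eq_sd: "sigma_vec \<Sigma> $ i = sd (axis i 1)"
proof -
  have "(\<Sigma> *v axis i 1) $ i = \<Sigma> $ i $ i"
    by (simp add: matrix_vector_mult_def axis_def if_distrib cong: if_cong)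
  then have "axis i 1 \<bullet> (\<Sigma> *v axis i 1) = \<Sigma> $ i $ i"
    by (simp add: inner_axis')
  then show ?thesis unfolding sd_def sigma_vec_def by simp
qed

lemma component_eq_std_proj:
  "X \<omega> $ i = \<mu> $ i + sigma_vec \<Sigma> $ i * std_proj (axis i 1) \<omega>"
  using sd_pos[of "axis i 1"]
  unfolding sigma_vec_eq_sd std_proj_def by (simp add: inner_axis')

lemma sum_eq_std_proj:
  "w \<noteq> 0 \<Longrightarrow> (\<Sum>i\<in>UNIV. wprod w X i \<omega>) = w \<bullet> \<mu> + sd w * std_proj w \<omega>"
  using sd_pos[of w] unfolding wprod_def std_proj_def by (simp add: inner_vec_def)


lemma div_ratio_continuous: "continuous_on Delta_simplex (div_ratio \<Sigma>)"
proof -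
  have "continuous_on Delta_simplex (\<lambda>x. \<Sigma> *v x)"
    using matrix_vector_mult_linear_continuous_on by blast
  moreover have "\<forall>x\<in>Delta_simplex. sqrt (x \<bullet> (\<Sigma> *v x)) \<noteq> 0"
    using sd_pos nonzero_if_Delta_simplex unfolding sd_def by fastforce
  ultimately show ?thesis
    unfolding div_ratio_def by (intro continuous_intros)
qed

lemma div_ratio_has_max: "\<exists>w\<in>Delta_simplex. \<forall>v\<in>Delta_simplex. div_ratio \<Sigma> v \<le> div_ratio \<Sigma> w"
  using continuous_attains_sup[OF compact_Delta_simplex Delta_simplex_nonempty div_ratio_continuous]
  by blast

definition risk_profile :: "(real \<Rightarrow> ('a \<Rightarrow> real) \<Rightarrow> real) \<Rightarrow> (real \<Rightarrow> real) \<Rightarrow> bool" where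
  "risk_profile \<rho> R \<longleftrightarrow> (\<forall>\<beta>\<in>{0<..<1}. \<forall>u. u \<noteq> 0 \<longrightarrow> (\<forall>a s. 0 \<le> s \<longrightarrow>
     \<rho> \<beta> (\<lambda>\<omega>. a + s * std_proj u \<omega>) = a + s * R \<beta>))"

lemma risk_profileD:
  assumes "risk_profile \<rho> R" "0 < \<beta>" "\<beta> < 1" "u \<noteq> 0" "0 \<le> s"
  shows "\<rho> \<beta> (\<lambda>\<omega>. a + s * std_proj u \<omega>) = a + s * R \<beta>"
  using assms unfolding risk_profile_def by simp

lemma risk_profile_VaR: "risk_profile (VaR M) (\<lambda>\<beta>. VaR M \<beta> Y)"
  unfolding risk_profile_def
  by (auto simp: VaR_affine VaR_cong_distr[OF _ _ distr_std_proj_eq_Y])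

lemma risk_profile_ES:
  assumes "integrable M Y"
  shows "risk_profile (ES M) (\<lambda>\<beta>. ES M \<beta> Y)"
  unfolding risk_profile_def
  by (auto simp: ES_affine integrable_std_proj[OF assms] ES_cong_distr[OF _ _ distr_std_proj_eq_Y])

lemma risk_of_sum:
  assumes R: "risk_profile \<rho> R" and w: "w \<in> Delta_simplex" and \<beta>: "0 < \<beta>" "\<beta> < 1"
  shows "\<rho> \<beta> (\<lambda>\<omega>. \<Sum>i\<in>UNIV. wprod w X i \<omega>) = w \<bullet> \<mu> + sd w * R \<beta>"
proof -
  have w0: "w \<noteq> 0" using w by (rule nonzero_if_Delta_simplex)
  show ?thesis
    unfolding sum_eq_std_proj[OF w0] using risk_profileD[OF R \<beta> w0] sd_pos[OF w0] by simp
qed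

lemma sum_of_risks:
  assumes R: "risk_profile \<rho> R" and w: "w \<in> Delta_simplex" and \<beta>: "0 < \<beta>" "\<beta> < 1"
  shows "(\<Sum>i\<in>UNIV. \<rho> \<beta> (wprod w X i)) = w \<bullet> \<mu> + (w \<bullet> sigma_vec \<Sigma>) * R \<beta>"
proof -
  have "\<rho> \<beta> (wprod w X i) = w $ i * \<mu> $ i + w $ i * sigma_vec \<Sigma> $ i * R \<beta>" for i
  proof -
    have "wprod w X i = (\<lambda>\<omega>. w $ i * \<mu> $ i + w $ i * sigma_vec \<Sigma> $ i * std_proj (axis i 1) \<omega>)"
      unfolding wprod_def component_eq_std_proj by (simp add: algebra_simps)
    moreover have "0 \<le> w $ i * sigma_vec \<Sigma> $ i"
      using w sd_pos[of "axis i 1"] unfolding Delta_simplex_def sigma_vec_eq_sd by simp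
    ultimately show ?thesis using risk_profileD[OF R \<beta>, of "axis i 1"] by simp
  qed
  then show ?thesis
    by (simp add: inner_vec_def sum.distrib sum_distrib_right)
qed

lemma DQ_le_if_div_ratio_le:
  assumes R: "risk_profile \<rho> R" "0 \<le> R \<alpha>" and \<alpha>: "0 < \<alpha>" "\<alpha> < 1"
    and w: "w \<in> Delta_simplex" and v: "v \<in> Delta_simplex"
    and ratio: "div_ratio \<Sigma> v \<le> div_ratio \<Sigma> w"
  shows "DQ \<rho> \<alpha> (wprod w X) \<le> DQ \<rho> \<alpha> (wprod v X)"
proof (rule DQ_le_if_affine_ratio_le)
  show "\<rho> \<beta> (\<lambda>\<omega>. \<Sum>i\<in>UNIV. wprod w X i \<omega>) = w \<bullet> \<mu> + sd w * R \<beta>"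
    "\<rho> \<beta> (\<lambda>\<omega>. \<Sum>i\<in>UNIV. wprod v X i \<omega>) = v \<bullet> \<mu> + sd v * R \<beta>"
    if "\<beta> \<in> {0<..<1}" for \<beta>
    using risk_of_sum[OF R(1) w] risk_of_sum[OF R(1) v] that by auto
  show "(\<Sum>i\<in>UNIV. \<rho> \<alpha> (wprod w X i)) = w \<bullet> \<mu> + (w \<bullet> sigma_vec \<Sigma>) * R \<alpha>"
    "(\<Sum>i\<in>UNIV. \<rho> \<alpha> (wprod v X i)) = v \<bullet> \<mu> + (v \<bullet> sigma_vec \<Sigma>) * R \<alpha>"
    using sum_of_risks[OF R(1) w \<alpha>] sum_of_risks[OF R(1) v \<alpha>] by auto
  show "0 < sd w" "0 < sd v" using sd_pos nonzero_if_Delta_simplex w v by auto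
  show "(v \<bullet> sigma_vec \<Sigma>) / sd v \<le> (w \<bullet> sigma_vec \<Sigma>) / sd w"
    using ratio unfolding div_ratio_def sd_def .
qed (use w v R \<alpha> in auto)

end

theorem theorem3:
  fixes M :: "'a measure" and X :: "'a \<Rightarrow> real^'n"
    and \<mu> :: "real^'n" and \<Sigma> :: "real^'n^'n" and \<tau> :: "real \<Rightarrow> real" and \<alpha> :: real
  assumes "prob_space M" and "atomless M"
    and "elliptical M X \<mu> \<Sigma> \<tau>" and "invertible \<Sigma>"
    and "0 < \<alpha>" and "\<alpha> < 1/2"
  shows "(\<exists>w\<in>Delta_simplex. \<forall>v\<in>Delta_simplex. div_ratio \<Sigma> v \<le> div_ratio \<Sigma> w)
    \<and> (\<forall>w\<in>Delta_simplex. (\<forall>v\<in>Delta_simplex. div_ratio \<Sigma> v \<le> div_ratio \<Sigma> w) \<longrightarrow>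
          (\<forall>v\<in>Delta_simplex. DQ (VaR M) \<alpha> (wprod w X) \<le> DQ (VaR M) \<alpha> (wprod v X)))
    \<and> ((\<forall>Y. elliptical1_std M Y \<tau> \<longrightarrow> integrable M (\<lambda>\<omega>. \<bar>Y \<omega>\<bar>)) \<longrightarrow>
       (\<forall>w\<in>Delta_simplex. (\<forall>v\<in>Delta_simplex. div_ratio \<Sigma> v \<le> div_ratio \<Sigma> w) \<longrightarrow>
          (\<forall>v\<in>Delta_simplex. DQ (ES M) \<alpha> (wprod w X) \<le> DQ (ES M) \<alpha> (wprod v X))))"
proof -
  interpret elliptical_vector M X \<mu> \<Sigma> \<tau>
    using assms by (intro elliptical_vector.intro elliptical_vector_axioms.intro) auto
  have \<alpha>: "0 < \<alpha>" "\<alpha> < 1" using assms by auto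
  have VaR_nonneg: "0 \<le> VaR M \<gamma> Y" if "0 < \<gamma>" "\<gamma> \<le> \<alpha>" for \<gamma>
    using VaR_nonneg_if_symmetric[OF Y_measurable distr_uminus_Y] that assms by simp
  have ES: "DQ (ES M) \<alpha> (wprod w X) \<le> DQ (ES M) \<alpha> (wprod v X)"
    if "integrable M (\<lambda>\<omega>. \<bar>Y \<omega>\<bar>)" "w \<in> Delta_simplex" "v \<in> Delta_simplex"
      "div_ratio \<Sigma> v \<le> div_ratio \<Sigma> w" for w v
  proof (rule DQ_le_if_div_ratio_le[OF risk_profile_ES _ \<alpha> that(2-4)])
    show "integrable M Y" using that(1) integrable_abs_iff[OF Y_measurable] by simp
    show "0 \<le> ES M \<alpha> Y" using VaR_nonneg \<alpha> by (intro ES_nonneg) auto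
  qed
  show ?thesis
    using div_ratio_has_max elliptical1_std_Y ES
      DQ_le_if_div_ratio_le[OF risk_profile_VaR VaR_nonneg[OF \<alpha>(1) order_refl] \<alpha>]
    by blast
qed

end
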